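(* Consider the formal power series in $q$ \[ K(q) = \frac{2 J_{20}^{15} J_{6,20} J_{10,20}}{J_{1,20}^2 J_{2,20} J_{3,20}^3 J_{5,20}^2 J_{7,20}^3 J_{8,20}^2 J_{9,20}^2} + \sum_{n=-\infty}^{\infty} \frac{(-1)^n q^{10n^2+15n+4}}{1+q^{10n+6}}, \] where each summand is expanded as a power series in $q$ (for terms where $m=10n+6<0$, one writes $\frac{1}{1+q^{m}} = \frac{q^{-m}}{1+q^{-m}}$). Then every coefficient of $q^N$, $N\ge 0$, in $K(q)$ is strictly positive.
   Context: Notation: $(a;q)_\infty = \prod_{i\ge 0}(1-aq^i)$ and $(a_1,\dots,a_k;q)_\infty = (a_1;q)_\infty\cdots(a_k;q)_\infty$. For positive integers $a<b$: $J_b = (q^b;q^b)_\infty$ and $J_{a,b} = (q^a, q^{b-a}, q^b; q^b)_\infty$. *)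

theory Defs
  imports "HOL-Computational_Algebra.Formal_Power_Series"
begin

text \<open>Infinite products and bilateral sums of formal power series are understood as limits
  in the standard (subdegree) metric topology on formal power series.\<close>

definition fps_infprod :: "(nat \<Rightarrow> real fps) \<Rightarrow> real fps" where
  "fps_infprod f = lim (\<lambda>n. \<Prod>i<n. f i)"

definition fps_bisum :: "(int \<Rightarrow> real fps) \<Rightarrow> real fps" where
  "fps_bisum f = lim (\<lambda>M. \<Sum>n\<in>{-int M..int M}. f n)"

definition qpoch_mon :: "nat \<Rightarrow> nat \<Rightarrow> real fps" where
  "qpoch_mon k b = fps_infprod (\<lambda>i. 1 - fps_X ^ (k + b * i))"

definition J :: "nat \<Rightarrow> real fps" where
  "J b = qpoch_mon b b"

definition J2 :: "nat \<Rightarrow> nat \<Rightarrow> real fps" where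
  "J2 a b = qpoch_mon a b * qpoch_mon (b - a) b * qpoch_mon b b"

definition K_term :: "int \<Rightarrow> real fps" where
  "K_term n = (let e = 10 * n^2 + 15 * n + 4; m = 10 * n + 6 in
     if m \<ge> 0 then (-1) ^ nat \<bar>n\<bar> * fps_X ^ nat e * inverse (1 + fps_X ^ nat m)
     else (-1) ^ nat \<bar>n\<bar> * fps_X ^ nat (e - m) * inverse (1 + fps_X ^ nat (- m)))"

definition K :: "real fps" where
  "K = fps_const 2 * J 20 ^ 15 * J2 6 20 * J2 10 20 *
       inverse (J2 1 20 ^ 2 * J2 2 20 * J2 3 20 ^ 3 * J2 5 20 ^ 2 * J2 7 20 ^ 3
                * J2 8 20 ^ 2 * J2 9 20 ^ 2)
     + fps_bisum K_term"

end

(*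
  Since the n-th summand of the sum is
  (-1)^n q^E / (1 + q^M) with E >= 3|n|, its coefficients lie in {-1, 0, 1} and vanish below
  degree 3|n|; hence the coefficient of q^N in the sum is at most 2 floor(N/3) + 1 in absolute value.

  The eta quotient has nonnegative coefficients, and in fact dominates
  1/((1 - q^2)(1 - q)) coefficientwise.  This follows from the exact product identities
    (q^2c; q^20) = (q^c; q^20) (q^(c+10); q^20) (-q^c; q^10),
    (1 - q^(a+b)) = (1 - q^a) (1 - q^b) (1/(1 - q^b) + q^a/(1 - q^a)),
  which turn the quotient into a product of series with nonnegative coefficients, one factor being
  1/(1 - q^2) * (1/(1 - q^19) + q/(1 - q)).  So the coefficient of q^N in the eta quotient is at
  least floor(N/2) + 1, and that of K is at least 2 (floor(N/2) + 1) - (2 floor(N/3) + 1) > 0.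
*)
theory Submission
  imports Defs
begin

unbundle fps_syntax

definition fps_eq_upto :: "nat \<Rightarrow> 'a::zero fps \<Rightarrow> 'a fps \<Rightarrow> bool" where
  "fps_eq_upto n f g \<longleftrightarrow> (\<forall>k\<le>n. f $ k = g $ k)"

lemma fps_eq_upto_refl [simp]: "fps_eq_upto n f f"
  by (simp add: fps_eq_upto_def)

lemma fps_eq_upto_mono: "fps_eq_upto n f g \<Longrightarrow> m \<le> n \<Longrightarrow> fps_eq_upto m f g"
  by (simp add: fps_eq_upto_def)

lemma fps_eq_upto_mult:
  fixes f g :: "'a::semiring_0 fps"
  shows "fps_eq_upto n f g \<Longrightarrow> fps_eq_upto n f' g' \<Longrightarrow> fps_eq_upto n (f * f') (g * g')"
  unfolding fps_eq_upto_def fps_mult_nth by (auto intro!: sum.cong)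

lemma lim_fps_nth_eq:
  fixes s :: "nat \<Rightarrow> real fps"
  assumes stable: "\<And>k M. B k \<le> M \<Longrightarrow> s M $ k = s (B k) $ k" and "B n \<le> M"
  shows "lim s $ n = s M $ n"
proof -
  have "s \<longlonglongrightarrow> Abs_fps (\<lambda>k. s (B k) $ k)"
    by (rule tendsto_fpsI) (auto simp: eventually_sequentially intro: stable)
  then have "lim s = Abs_fps (\<lambda>k. s (B k) $ k)" by (rule limI)
  with stable[OF \<open>B n \<le> M\<close>] show ?thesis by simp
qed

definition fps_geometric :: "'a::field \<Rightarrow> nat \<Rightarrow> 'a fps" where
  "fps_geometric c a = Abs_fps (\<lambda>k. if a dvd k then c ^ (k div a) else 0)"

lemma fps_geometric_inverse:
  assumes "0 < a"
  shows "inverse (1 - fps_const c * fps_X ^ a) = fps_geometric c a"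
proof (rule fps_inverse_unique, rule fps_ext)
  fix k
  have nth: "((1 - fps_const c * fps_X ^ a) * fps_geometric c a) $ k =
      fps_geometric c a $ k - c * (if k < a then 0 else fps_geometric c a $ (k - a))"
    by (simp add: algebra_simps fps_X_power_mult_nth)
  show "((1 - fps_const c * fps_X ^ a) * fps_geometric c a) $ k = 1 $ k"
  proof (cases "k < a")
    case True
    then have "a dvd k \<longleftrightarrow> k = 0" using assms by (auto dest: dvd_imp_le)
    with True show ?thesis unfolding nth by (simp add: fps_geometric_def)
  next
    case False
    then obtain j where k: "k = j + a" by (metis add.commute le_add_diff_inverse not_less)
    have "a dvd k \<longleftrightarrow> a dvd j" and "k div a = Suc (j div a)"
      using assms by (simp_all add: k)
    then show ?thesis unfolding nth using assms by (simp add: fps_geometric_def k)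
  qed
qed

lemma inverse_one_minus_X_power:
  "0 < a \<Longrightarrow> inverse (1 - fps_X ^ a :: 'a::field fps) = fps_geometric 1 a"
  using fps_geometric_inverse[of a 1] by simp

lemma inverse_one_plus_X_power:
  "0 < a \<Longrightarrow> inverse (1 + fps_X ^ a :: 'a::field fps) = fps_geometric (-1) a"
  using fps_geometric_inverse[of a "-1"] by (simp flip: fps_const_neg)

section \<open>Infinite products\<close>

definition converging_factors :: "(nat \<Rightarrow> real fps) \<Rightarrow> bool" where
  "converging_factors f \<longleftrightarrow> (\<forall>i. fps_eq_upto i (f i) 1)"

lemma fps_infprod_eq_upto:
  assumes conv: "converging_factors f" and "n < L"
  shows "fps_eq_upto n (fps_infprod f) (\<Prod>i<L. f i)"
proof -
  define s where "s = (\<lambda>M. \<Prod>i<M. f i)"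
  have stable: "fps_eq_upto k (s M) (s (Suc k))" if "Suc k \<le> M" for k M
    using that
  proof (induction M rule: dec_induct)
    case (step M)
    have "fps_eq_upto k (f M) 1"
      using conv step.hyps by (auto simp: converging_factors_def intro: fps_eq_upto_mono)
    from fps_eq_upto_mult[OF step.IH this] show ?case by (simp add: s_def)
  qed simp
  have "lim s $ k = s L $ k" if "k \<le> n" for k
    by (rule lim_fps_nth_eq[where B = Suc])
      (use stable that \<open>n < L\<close> in \<open>auto simp: fps_eq_upto_def\<close>)
  moreover have "fps_infprod f = lim s" by (simp add: fps_infprod_def s_def)
  ultimately show ?thesis by (simp add: fps_eq_upto_def s_def)
qed

lemma fps_infprod_nth:
  "converging_factors f \<Longrightarrow> fps_infprod f $ k = (\<Prod>i<Suc k. f i) $ k"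
  using fps_infprod_eq_upto[of f k "Suc k"] by (simp add: fps_eq_upto_def)

lemma fps_infprod_nth_0 [simp]: "converging_factors f \<Longrightarrow> fps_infprod f $ 0 = 1"
  using fps_infprod_nth[of f 0] by (simp add: converging_factors_def fps_eq_upto_def)

lemma converging_factors_mult:
  "converging_factors f \<Longrightarrow> converging_factors g \<Longrightarrow> converging_factors (\<lambda>i. f i * g i)"
  unfolding converging_factors_def using fps_eq_upto_mult[of i "f i" 1 "g i" 1 for i] by simp

lemma converging_factors_one_minus_X_power:
  assumes "\<And>i. i < d i"
  shows "converging_factors (\<lambda>i. 1 - fps_X ^ d i)"
proof (unfold converging_factors_def fps_eq_upto_def, intro allI impI)
  fix i k :: nat
  assume "k \<le> i"
  with assms[of i] show "(1 - fps_X ^ d i :: real fps) $ k = 1 $ k" by auto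
qed

lemma converging_factors_one_plus_X_power:
  assumes "\<And>i. i < d i"
  shows "converging_factors (\<lambda>i. 1 + fps_X ^ d i)"
proof (unfold converging_factors_def fps_eq_upto_def, intro allI impI)
  fix i k :: nat
  assume "k \<le> i"
  with assms[of i] show "(1 + fps_X ^ d i :: real fps) $ k = 1 $ k" by auto
qed

lemma converging_factors_geometric:
  assumes "\<And>i. i < d i"
  shows "converging_factors (\<lambda>i. fps_geometric 1 (d i))"
proof (unfold converging_factors_def fps_eq_upto_def, intro allI impI)
  fix i k :: nat
  assume "k \<le> i"
  with assms[of i] have "d i dvd k \<longleftrightarrow> k = 0"
    by (auto dest: dvd_imp_le)
  then show "fps_geometric 1 (d i) $ k = (1 :: real fps) $ k"
    by (simp add: fps_geometric_def)
qed

lemma fps_infprod_mult: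
  assumes "converging_factors f" "converging_factors g"
  shows "fps_infprod (\<lambda>i. f i * g i) = fps_infprod f * fps_infprod g"
proof (rule fps_ext)
  fix k
  have "fps_eq_upto k (fps_infprod f * fps_infprod g) ((\<Prod>i<Suc k. f i) * (\<Prod>i<Suc k. g i))"
    using assms by (intro fps_eq_upto_mult fps_infprod_eq_upto) auto
  then show "fps_infprod (\<lambda>i. f i * g i) $ k = (fps_infprod f * fps_infprod g) $ k"
    using assms converging_factors_mult
    by (auto simp: fps_infprod_nth fps_eq_upto_def prod.distrib)
qed

lemma fps_infprod_const_one [simp]: "fps_infprod (\<lambda>_. 1) = 1"
proof -
  have "converging_factors (\<lambda>_. 1)" by (simp add: converging_factors_def)
  then show ?thesis by (intro fps_ext) (simp add: fps_infprod_nth)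
qed

lemma fps_infprod_Suc_shift:
  assumes "converging_factors f"
  shows "fps_infprod f = f 0 * fps_infprod (\<lambda>i. f (Suc i))"
proof (rule fps_ext)
  fix k
  have conv: "converging_factors (\<lambda>i. f (Suc i))"
    using assms by (auto simp: converging_factors_def intro: fps_eq_upto_mono)
  have "fps_infprod f $ k = (\<Prod>i<Suc (Suc k). f i) $ k"
    using fps_infprod_eq_upto[OF assms, of k "Suc (Suc k)"] by (simp add: fps_eq_upto_def)
  also have "\<dots> = (f 0 * (\<Prod>i<Suc k. f (Suc i))) $ k"
    by (simp only: prod.lessThan_Suc_shift)
  also have "\<dots> = (f 0 * fps_infprod (\<lambda>i. f (Suc i))) $ k"
    using fps_eq_upto_mult[OF fps_eq_upto_refl[of k "f 0"] fps_infprod_eq_upto[OF conv, of k "Suc k"]]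
    by (simp add: fps_eq_upto_def)
  finally show "fps_infprod f $ k = (f 0 * fps_infprod (\<lambda>i. f (Suc i))) $ k" .
qed

lemma fps_infprod_in_pairs:
  assumes "converging_factors f"
  shows "fps_infprod f = fps_infprod (\<lambda>i. f (2 * i) * f (Suc (2 * i)))"
proof (rule fps_ext)
  fix k
  have conv: "converging_factors (\<lambda>i. f (2 * i) * f (Suc (2 * i)))"
  proof (unfold converging_factors_def, intro allI)
    fix i
    have "fps_eq_upto i (f (2 * i)) 1" "fps_eq_upto i (f (Suc (2 * i))) 1"
      using assms by (auto simp: converging_factors_def intro: fps_eq_upto_mono)
    from fps_eq_upto_mult[OF this] show "fps_eq_upto i (f (2 * i) * f (Suc (2 * i))) 1" by simp
  qed
  have "fps_infprod f $ k = (\<Prod>i\<le>Suc (2 * k). f i) $ k"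
    using fps_infprod_eq_upto[OF assms, of k "Suc (Suc (2 * k))"]
    by (simp add: fps_eq_upto_def lessThan_Suc_atMost)
  also have "\<dots> = (\<Prod>i\<le>k. f (2 * i) * f (Suc (2 * i))) $ k"
    by (simp only: prod.in_pairs_0)
  also have "\<dots> = fps_infprod (\<lambda>i. f (2 * i) * f (Suc (2 * i))) $ k"
    by (simp add: fps_infprod_nth[OF conv] lessThan_Suc_atMost)
  finally show "fps_infprod f $ k = fps_infprod (\<lambda>i. f (2 * i) * f (Suc (2 * i))) $ k" .
qed

section \<open>Series with nonnegative coefficients\<close>

definition nonneg_unit_fps :: "real fps \<Rightarrow> bool" where
  "nonneg_unit_fps f \<longleftrightarrow> (\<forall>n. 0 \<le> f $ n) \<and> f $ 0 = 1"

lemma nonneg_unit_fps_one [simp]: "nonneg_unit_fps 1"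
  by (simp add: nonneg_unit_fps_def)

lemma nonneg_unit_fps_mult: "nonneg_unit_fps f \<Longrightarrow> nonneg_unit_fps g \<Longrightarrow> nonneg_unit_fps (f * g)"
  unfolding nonneg_unit_fps_def fps_mult_nth by (auto intro!: sum_nonneg)

lemma nonneg_unit_fps_power: "nonneg_unit_fps f \<Longrightarrow> nonneg_unit_fps (f ^ n)"
  by (induction n) (auto intro: nonneg_unit_fps_mult)

lemma nonneg_unit_fps_prod: "(\<And>i. i \<in> A \<Longrightarrow> nonneg_unit_fps (f i)) \<Longrightarrow> nonneg_unit_fps (\<Prod>i\<in>A. f i)"
  by (induction A rule: infinite_finite_induct) (auto intro: nonneg_unit_fps_mult)

lemma nonneg_unit_fps_infprod:
  assumes "converging_factors f" and "\<And>i. nonneg_unit_fps (f i)"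
  shows "nonneg_unit_fps (fps_infprod f)"
  using assms nonneg_unit_fps_prod[of "{..<Suc k}" f for k]
  by (auto simp: nonneg_unit_fps_def fps_infprod_nth)

lemma nonneg_unit_fps_geometric: "nonneg_unit_fps (fps_geometric 1 a)"
  by (simp add: nonneg_unit_fps_def fps_geometric_def)

lemma nonneg_unit_fps_one_plus_X_power: "0 < a \<Longrightarrow> nonneg_unit_fps (1 + fps_X ^ a)"
  by (simp add: nonneg_unit_fps_def)

lemma nth_le_mult_nonneg_unit_fps:
  assumes f: "\<And>k. 0 \<le> f $ k" and g: "nonneg_unit_fps g"
  shows "f $ n \<le> (f * g) $ n"
proof -
  have "f $ n = f $ n * g $ (n - n)" using g by (simp add: nonneg_unit_fps_def)
  also have "\<dots> \<le> (\<Sum>i=0..n. f $ i * g $ (n - i))"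
    by (rule member_le_sum) (use f g in \<open>auto simp: nonneg_unit_fps_def\<close>)
  finally show ?thesis by (simp add: fps_mult_nth)
qed

section \<open>Dissections of q-Pochhammer products\<close>

(* (1 - q^(a+b)) / ((1 - q^a)(1 - q^b)), in a form whose coefficients are visibly nonnegative *)
definition geo_quot :: "nat \<Rightarrow> nat \<Rightarrow> real fps" where
  "geo_quot a b = fps_geometric 1 b + fps_X ^ a * fps_geometric 1 a"

lemma one_minus_X_power_add:
  assumes "0 < a" "0 < b"
  shows "1 - fps_X ^ (a + b) = (1 - fps_X ^ a) * (1 - fps_X ^ b) * geo_quot a b"
proof -
  have ha: "(1 - fps_X ^ a) * fps_geometric 1 a = (1 :: real fps)"
    and hb: "(1 - fps_X ^ b) * fps_geometric 1 b = (1 :: real fps)"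
    using assms by (simp_all flip: inverse_one_minus_X_power add: inverse_mult_eq_1')
  have "(1 - fps_X ^ a) * (1 - fps_X ^ b) * geo_quot a b =
      (1 - fps_X ^ a) * ((1 - fps_X ^ b) * fps_geometric 1 b)
      + fps_X ^ a * (1 - fps_X ^ b) * ((1 - fps_X ^ a) * fps_geometric 1 a)"
    unfolding geo_quot_def by (simp add: algebra_simps)
  also have "\<dots> = 1 - fps_X ^ (a + b)"
    unfolding ha hb by (simp add: algebra_simps power_add)
  finally show ?thesis ..
qed

lemma nonneg_unit_geo_quot: "0 < a \<Longrightarrow> nonneg_unit_fps (geo_quot a b)"
  by (simp add: nonneg_unit_fps_def geo_quot_def fps_geometric_def fps_X_power_mult_nth)

lemma converging_factors_geo_quot:
  assumes "\<And>i. i < a i" "\<And>i. i < b i"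
  shows "converging_factors (\<lambda>i. geo_quot (a i) (b i))"
proof (unfold converging_factors_def fps_eq_upto_def, intro allI impI)
  fix i k :: nat
  assume "k \<le> i"
  with assms[of i] have "b i dvd k \<longleftrightarrow> k = 0"
    by (auto dest: dvd_imp_le)
  with \<open>k \<le> i\<close> assms[of i] show "geo_quot (a i) (b i) $ k = 1 $ k"
    by (simp add: geo_quot_def fps_geometric_def fps_X_power_mult_nth)
qed

lemma less_add_mult_self: "0 < r \<Longrightarrow> 0 < m \<Longrightarrow> i < r + m * (i :: nat)"
  using mult_le_mono1[of 1 m i] by linarith

lemma converging_factors_qpoch:
  "0 < r \<Longrightarrow> 0 < m \<Longrightarrow> converging_factors (\<lambda>i. 1 - fps_X ^ (r + m * i))"
  by (rule converging_factors_one_minus_X_power) (rule less_add_mult_self)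

lemma qpoch_mon_nth_0 [simp]: "0 < r \<Longrightarrow> 0 < m \<Longrightarrow> qpoch_mon r m $ 0 = 1"
  by (simp add: qpoch_mon_def converging_factors_qpoch)

definition qpoch_mon_plus :: "nat \<Rightarrow> nat \<Rightarrow> real fps" where
  "qpoch_mon_plus k b = fps_infprod (\<lambda>i. 1 + fps_X ^ (k + b * i))"

lemma nonneg_unit_qpoch_mon_plus: "0 < r \<Longrightarrow> 0 < m \<Longrightarrow> nonneg_unit_fps (qpoch_mon_plus r m)"
  unfolding qpoch_mon_plus_def
  by (intro nonneg_unit_fps_infprod converging_factors_one_plus_X_power
        nonneg_unit_fps_one_plus_X_power less_add_mult_self) auto

lemma qpoch_mon_double:
  assumes "0 < r" "0 < m"
  shows "qpoch_mon (2 * r) (2 * m) = qpoch_mon r m * qpoch_mon_plus r m"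
proof -
  have "1 - fps_X ^ (2 * r + 2 * m * i) = (1 - fps_X ^ (r + m * i)) * (1 + fps_X ^ (r + m * i) :: real fps)"
    for i
  proof -
    have "2 * r + 2 * m * i = (r + m * i) + (r + m * i)" by simp
    then show ?thesis by (simp only: power_add) (simp add: algebra_simps)
  qed
  moreover have "converging_factors (\<lambda>i. 1 + fps_X ^ (r + m * i))"
    using assms by (intro converging_factors_one_plus_X_power less_add_mult_self)
  ultimately show ?thesis
    unfolding qpoch_mon_def qpoch_mon_plus_def
    using fps_infprod_mult[OF converging_factors_qpoch[OF assms]] by simp
qed

lemma qpoch_mon_in_pairs:
  assumes "0 < r" "0 < m"
  shows "qpoch_mon r m = qpoch_mon r (2 * m) * qpoch_mon (r + m) (2 * m)"
proof -
  have "qpoch_mon r m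
      = fps_infprod (\<lambda>i. (1 - fps_X ^ (r + 2 * m * i)) * (1 - fps_X ^ (r + m + 2 * m * i)))"
    unfolding qpoch_mon_def
    by (subst fps_infprod_in_pairs[OF converging_factors_qpoch[OF assms]]) (simp add: algebra_simps)
  also have "\<dots> = qpoch_mon r (2 * m) * qpoch_mon (r + m) (2 * m)"
    unfolding qpoch_mon_def using assms by (intro fps_infprod_mult converging_factors_qpoch) auto
  finally show ?thesis .
qed

lemma qpoch_mon_Suc_shift:
  assumes "0 < r" "0 < m"
  shows "qpoch_mon r m = (1 - fps_X ^ r) * qpoch_mon (r + m) m"
  unfolding qpoch_mon_def
  by (subst fps_infprod_Suc_shift[OF converging_factors_qpoch[OF assms]]) (simp add: algebra_simps)

lemma inverse_qpoch_mon:
  assumes "0 < r" "0 < m"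
  shows "inverse (qpoch_mon r m) = fps_infprod (\<lambda>i. fps_geometric 1 (r + m * i))"
proof (rule fps_inverse_unique)
  have conv: "converging_factors (\<lambda>i. fps_geometric 1 (r + m * i))"
    using assms by (intro converging_factors_geometric less_add_mult_self)
  have "(1 - fps_X ^ (r + m * i)) * fps_geometric 1 (r + m * i) = (1 :: real fps)" for i
    using assms by (simp flip: inverse_one_minus_X_power add: inverse_mult_eq_1')
  then show "qpoch_mon r m * fps_infprod (\<lambda>i. fps_geometric 1 (r + m * i)) = 1"
    unfolding qpoch_mon_def using fps_infprod_mult[OF converging_factors_qpoch[OF assms] conv] by simp
qed

lemma nonneg_unit_inverse_qpoch_mon: "0 < r \<Longrightarrow> 0 < m \<Longrightarrow> nonneg_unit_fps (inverse (qpoch_mon r m))"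
  unfolding inverse_qpoch_mon
  by (intro nonneg_unit_fps_infprod converging_factors_geometric less_add_mult_self
        nonneg_unit_fps_geometric)

lemma inverse_qpoch_mon_Suc_shift:
  "0 < r \<Longrightarrow> 0 < m \<Longrightarrow>
    inverse (qpoch_mon r m) = fps_geometric 1 r * inverse (qpoch_mon (r + m) m)"
  by (subst qpoch_mon_Suc_shift) (simp_all add: fps_inverse_mult inverse_one_minus_X_power)

definition geo_quot_pair :: "nat \<Rightarrow> nat \<Rightarrow> nat \<Rightarrow> real fps" where
  "geo_quot_pair a m i = geo_quot (a + m * i) (m - a + m * i) * geo_quot (a + m * i) (2 * m - a + m * i)"

definition geo_quot_prod :: "nat \<Rightarrow> nat \<Rightarrow> real fps" where
  "geo_quot_prod a m = fps_infprod (geo_quot_pair a m)"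

lemma converging_factors_geo_quot_shifted:
  "0 < a \<Longrightarrow> 0 < b \<Longrightarrow> 0 < m \<Longrightarrow> converging_factors (\<lambda>i. geo_quot (a + m * i) (b + m * i))"
  by (intro converging_factors_geo_quot less_add_mult_self)

lemma converging_factors_geo_quot_pair:
  "0 < a \<Longrightarrow> a < m \<Longrightarrow> converging_factors (geo_quot_pair a m)"
  unfolding geo_quot_pair_def[abs_def]
  by (intro converging_factors_mult converging_factors_geo_quot_shifted) auto

lemma nonneg_unit_geo_quot_pair: "0 < a \<Longrightarrow> nonneg_unit_fps (geo_quot_pair a m i)"
  unfolding geo_quot_pair_def by (intro nonneg_unit_fps_mult nonneg_unit_geo_quot) auto

lemma nonneg_unit_geo_quot_prod: "0 < a \<Longrightarrow> a < m \<Longrightarrow> nonneg_unit_fps (geo_quot_prod a m)"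
  unfolding geo_quot_prod_def
  by (intro nonneg_unit_fps_infprod converging_factors_geo_quot_pair nonneg_unit_geo_quot_pair)

lemma geo_quot_prod_first_factor:
  assumes "0 < a" "a < m"
  obtains T where "nonneg_unit_fps T" "geo_quot_prod a m = geo_quot a (m - a) * T"
proof
  have conv: "converging_factors (geo_quot_pair a m)"
    using assms by (rule converging_factors_geo_quot_pair)
  show "nonneg_unit_fps (geo_quot a (2 * m - a) * fps_infprod (\<lambda>i. geo_quot_pair a m (Suc i)))"
    using conv assms
    by (intro nonneg_unit_fps_mult nonneg_unit_geo_quot nonneg_unit_fps_infprod nonneg_unit_geo_quot_pair)
      (auto simp: converging_factors_def intro: fps_eq_upto_mono)
  show "geo_quot_prod a m
      = geo_quot a (m - a) * (geo_quot a (2 * m - a) * fps_infprod (\<lambda>i. geo_quot_pair a m (Suc i)))"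
    unfolding geo_quot_prod_def fps_infprod_Suc_shift[OF conv] by (simp add: geo_quot_pair_def)
qed

lemma qpoch_mon_self_factor:
  assumes "0 < a" "a < m"
  shows "(1 - fps_X ^ (m - a)) * qpoch_mon m m
    = qpoch_mon a m ^ 2 * qpoch_mon (m - a) m ^ 2 * geo_quot_prod a m"
proof -
  define G1 where "G1 i = geo_quot (a + m * i) (m - a + m * i)" for i
  define G2 where "G2 i = geo_quot (a + m * i) (2 * m - a + m * i)" for i
  have conv: "converging_factors G1" "converging_factors G2"
    "converging_factors (\<lambda>i. 1 - fps_X ^ (a + m * i))"
    "converging_factors (\<lambda>i. 1 - fps_X ^ (m - a + m * i))"
    "converging_factors (\<lambda>i. 1 - fps_X ^ (2 * m - a + m * i))"
    unfolding G1_def[abs_def] G2_def[abs_def]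
    by (rule converging_factors_geo_quot_shifted converging_factors_qpoch; use assms in simp)+
  have "1 - fps_X ^ (m + 2 * m * i)
      = (1 - fps_X ^ (a + m * i)) * (1 - fps_X ^ (m - a + m * i)) * G1 i" for i
    using one_minus_X_power_add[of "a + m * i" "m - a + m * i"] assms
    by (simp add: G1_def algebra_simps)
  then have odd: "qpoch_mon m (2 * m) = qpoch_mon a m * qpoch_mon (m - a) m * fps_infprod G1"
    unfolding qpoch_mon_def using conv by (simp add: fps_infprod_mult converging_factors_mult)
  have "1 - fps_X ^ (2 * m + 2 * m * i)
      = (1 - fps_X ^ (a + m * i)) * (1 - fps_X ^ (2 * m - a + m * i)) * G2 i" for i
    using one_minus_X_power_add[of "a + m * i" "2 * m - a + m * i"] assms
    by (simp add: G2_def algebra_simps)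
  then have even: "qpoch_mon (2 * m) (2 * m) = qpoch_mon a m * qpoch_mon (2 * m - a) m * fps_infprod G2"
    unfolding qpoch_mon_def using conv by (simp add: fps_infprod_mult converging_factors_mult)
  have "qpoch_mon m m = qpoch_mon m (2 * m) * qpoch_mon (2 * m) (2 * m)"
    using qpoch_mon_in_pairs[of m m] assms by (simp add: mult_2)
  moreover have "qpoch_mon (m - a) m = (1 - fps_X ^ (m - a)) * qpoch_mon (2 * m - a) m"
    using qpoch_mon_Suc_shift[of "m - a" m] assms by (simp add: mult_2)
  moreover have "geo_quot_prod a m = fps_infprod G1 * fps_infprod G2"
    unfolding geo_quot_prod_def fps_infprod_mult[OF conv(1,2), symmetric] G1_def G2_def
    by (simp add: geo_quot_pair_def[abs_def])
  ultimately show ?thesis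
    unfolding odd even by (simp add: power2_eq_square ac_simps)
qed

section \<open>The eta quotient\<close>

lemma fps_mult_inverse_cancel:
  fixes w n c r d :: "'a::field fps"
  assumes "w * n = c * r" and "w $ 0 \<noteq> 0" and "c $ 0 \<noteq> 0"
  shows "n * inverse (c * d) = r * inverse (w * d)"
proof -
  have "n = inverse w * (c * r)"
    using assms(2) by (simp flip: assms(1) add: mult.assoc[symmetric] inverse_mult_eq_1)
  then have "n * inverse (c * d) = (c * inverse c) * r * inverse w * inverse d"
    by (simp add: fps_inverse_mult ac_simps)
  then show ?thesis
    using assms(3) by (simp add: inverse_mult_eq_1' fps_inverse_mult ac_simps)
qed

definition K_product :: "real fps" where
  "K_product = J 20 ^ 15 * J2 6 20 * J2 10 20 *
     inverse (J2 1 20 ^ 2 * J2 2 20 * J2 3 20 ^ 3 * J2 5 20 ^ 2 * J2 7 20 ^ 3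
              * J2 8 20 ^ 2 * J2 9 20 ^ 2)"

lemma K_eq_product_plus_bisum: "K = fps_const 2 * K_product + fps_bisum K_term"
  by (simp add: K_def K_product_def mult.assoc)

lemma K_product_eq:
  "K_product = geo_quot_prod 1 20 * geo_quot_prod 3 20
     * qpoch_mon_plus 3 10 * qpoch_mon_plus 7 10 * qpoch_mon_plus 5 10 ^ 2
     * inverse ((1 - fps_X ^ 19) * (1 - fps_X ^ 17) * (qpoch_mon 2 20 * qpoch_mon 18 20
         * (qpoch_mon 7 20 * qpoch_mon 13 20) ^ 2 * (qpoch_mon 8 20 * qpoch_mon 12 20) ^ 2
         * (qpoch_mon 9 20 * qpoch_mon 11 20) ^ 2))"
  (is "_ = ?R * inverse (?w * ?D)")
proof -
  define P where "P r = qpoch_mon r 20" for r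
  have double: "P (2 * c) = P c * P (c + 10) * qpoch_mon_plus c 10" if "0 < c" for c
    using qpoch_mon_double[of c 10] qpoch_mon_in_pairs[of c 10] that by (simp add: P_def)
  have self: "(1 - fps_X ^ (20 - a)) * P 20 = P a ^ 2 * P (20 - a) ^ 2 * geo_quot_prod a 20"
    if "0 < a" "a < 20" for a
    using qpoch_mon_self_factor[of a 20] that by (simp add: P_def)
  \<comment> \<open>the part of the denominator cancelled by the dissected numerator\<close>
  define C where "C = P 20 ^ 15 * (P 1 * P 19) ^ 2 * (P 3 * P 17) ^ 3 * (P 5 * P 15) ^ 2 * P 7 * P 13"
  have C0: "C $ 0 = 1"
    by (simp add: C_def P_def fps_nth_power_0)
  have "?w * (J 20 ^ 15 * J2 6 20 * J2 10 20)
      = ((1 - fps_X ^ 19) * P 20) * ((1 - fps_X ^ 17) * P 20) * P 20 ^ 15 * P 6 * P 14 * P 10 ^ 2"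
    by (simp add: J_def J2_def P_def power2_eq_square ac_simps)
  also have "\<dots> = C * ?R"
    using self[of 1] self[of 3] double[of 3] double[of 7] double[of 5]
    by (simp add: C_def power2_eq_square power3_eq_cube ac_simps)
  finally have num: "?w * (J 20 ^ 15 * J2 6 20 * J2 10 20) = C * ?R" .
  have den: "J2 1 20 ^ 2 * J2 2 20 * J2 3 20 ^ 3 * J2 5 20 ^ 2 * J2 7 20 ^ 3 * J2 8 20 ^ 2 * J2 9 20 ^ 2
      = C * ?D"
    by (simp add: C_def J2_def P_def eval_nat_numeral power_Suc ac_simps del: power_Suc0_right)
  show ?thesis
    unfolding K_product_def den by (rule fps_mult_inverse_cancel[OF num]) (simp_all add: C0)
qed

lemma K_product_factor:
  obtains W where "nonneg_unit_fps W" "K_product = (fps_geometric 1 2 * geo_quot 1 19) * W"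
proof -
  obtain T where T: "nonneg_unit_fps T" "geo_quot_prod 1 20 = geo_quot 1 19 * T"
    using geo_quot_prod_first_factor[of 1 20] by auto
  define W where "W = T * geo_quot_prod 3 20
     * qpoch_mon_plus 3 10 * qpoch_mon_plus 7 10 * qpoch_mon_plus 5 10 ^ 2
     * inverse ((1 - fps_X ^ 19) * (1 - fps_X ^ 17) * (qpoch_mon 22 20 * qpoch_mon 18 20
         * (qpoch_mon 7 20 * qpoch_mon 13 20) ^ 2 * (qpoch_mon 8 20 * qpoch_mon 12 20) ^ 2
         * (qpoch_mon 9 20 * qpoch_mon 11 20) ^ 2))"
  have "nonneg_unit_fps W"
    unfolding W_def fps_inverse_mult fps_inverse_power
    by (intro nonneg_unit_fps_mult nonneg_unit_fps_power T nonneg_unit_geo_quot_prod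
        nonneg_unit_qpoch_mon_plus nonneg_unit_inverse_qpoch_mon)
      (simp_all add: inverse_one_minus_X_power nonneg_unit_fps_geometric)
  moreover have "K_product = (fps_geometric 1 2 * geo_quot 1 19) * W"
    unfolding K_product_eq W_def T(2)
    by (simp add: fps_inverse_mult fps_inverse_power inverse_qpoch_mon_Suc_shift[of 2 20] ac_simps)
  ultimately show ?thesis by (rule that)
qed

lemma sum_even_indicator: "(\<Sum>i=0..N. if even i then 1 else 0 :: real) = real (N div 2 + 1)"
  by (induction N) (auto simp: odd_Suc_div_two)

lemma geometric_2_geo_quot_1_19_nth_ge: "real (N div 2 + 1) \<le> (fps_geometric 1 2 * geo_quot 1 19) $ N"
proof -
  have "1 \<le> geo_quot 1 19 $ j" for j
    by (cases j) (auto simp: geo_quot_def fps_geometric_def fps_X_power_mult_nth)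
  then have "(\<Sum>i=0..N. if even i then 1 else 0 :: real)
      \<le> (\<Sum>i=0..N. fps_geometric 1 2 $ i * geo_quot 1 19 $ (N - i))"
    by (intro sum_mono) (auto simp: fps_geometric_def)
  then show ?thesis by (simp add: sum_even_indicator fps_mult_nth)
qed

lemma K_product_nth_ge: "real (N div 2 + 1) \<le> K_product $ N"
proof -
  obtain W where W: "nonneg_unit_fps W" "K_product = (fps_geometric 1 2 * geo_quot 1 19) * W"
    by (rule K_product_factor)
  have "nonneg_unit_fps (fps_geometric 1 2 * geo_quot 1 19)"
    by (intro nonneg_unit_fps_mult nonneg_unit_fps_geometric nonneg_unit_geo_quot) simp
  then have "(fps_geometric 1 2 * geo_quot 1 19) $ N \<le> K_product $ N"
    unfolding W(2) by (intro nth_le_mult_nonneg_unit_fps W(1)) (simp add: nonneg_unit_fps_def)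
  with geometric_2_geo_quot_1_19_nth_ge show ?thesis by (rule order_trans)
qed

section \<open>The bilateral series\<close>

lemma fps_bisum_nth:
  assumes vanish: "\<And>n k. int k < \<bar>n\<bar> \<Longrightarrow> f n $ k = 0"
  shows "fps_bisum f $ N = (\<Sum>n\<in>{-int N..int N}. f n) $ N"
proof -
  define s where "s = (\<lambda>M. \<Sum>n\<in>{-int M..int M}. f n)"
  have stable: "s M $ k = s k $ k" if "k \<le> M" for k M
  proof -
    have "(\<Sum>n\<in>{-int M..int M}. f n $ k) = (\<Sum>n\<in>{-int k..int k}. f n $ k)"
    proof (rule sum.mono_neutral_right)
      show "{-int k..int k} \<subseteq> {-int M..int M}" using that by simp
      show "\<forall>n\<in>{-int M..int M} - {-int k..int k}. f n $ k = 0"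
      proof
        fix n assume "n \<in> {-int M..int M} - {-int k..int k}"
        then have "int k < \<bar>n\<bar>" by auto
        then show "f n $ k = 0" by (rule vanish)
      qed
    qed simp
    then show ?thesis by (simp add: s_def fps_sum_nth)
  qed
  have "lim s $ N = s N $ N"
    by (rule lim_fps_nth_eq[where B = "\<lambda>k. k", OF stable]) simp_all
  then show ?thesis by (simp add: fps_bisum_def s_def)
qed

lemma neg_one_power_mult_nth: "((- 1) ^ k * f :: 'a::ring_1 fps) $ j = (- 1) ^ k * f $ j"
  by (induction k) simp_all

lemma K_term_shifted_form:
  obtains E M where "K_term n = (-1) ^ nat \<bar>n\<bar> * (fps_X ^ nat E * inverse (1 + fps_X ^ M))"
    and "3 * \<bar>n\<bar> \<le> E" and "0 < M"
proof (cases "0 \<le> 10 * n + 6")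
  case True
  then have "0 \<le> n" by simp
  show ?thesis
  proof (rule that)
    show "K_term n = (-1) ^ nat \<bar>n\<bar>
        * (fps_X ^ nat (10 * n\<^sup>2 + 15 * n + 4) * inverse (1 + fps_X ^ nat (10 * n + 6)))"
      using True by (simp add: K_term_def Let_def mult.assoc)
    show "3 * \<bar>n\<bar> \<le> 10 * n\<^sup>2 + 15 * n + 4"
      using \<open>0 \<le> n\<close> mult_nonneg_nonneg[of n n] by (simp add: power2_eq_square)
  qed (use \<open>0 \<le> n\<close> in simp)
next
  case False
  then have "n \<le> -1" by simp
  show ?thesis
  proof (rule that)
    show "K_term n = (-1) ^ nat \<bar>n\<bar>
        * (fps_X ^ nat (10 * n\<^sup>2 + 15 * n + 4 - (10 * n + 6))
           * inverse (1 + fps_X ^ nat (- (10 * n + 6))))"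
      using False by (simp add: K_term_def Let_def mult.assoc)
    show "3 * \<bar>n\<bar> \<le> 10 * n\<^sup>2 + 15 * n + 4 - (10 * n + 6)"
      using \<open>n \<le> -1\<close> mult_nonneg_nonneg[of "-n" "-n - 1"]
      by (simp add: power2_eq_square algebra_simps)
  qed (use \<open>n \<le> -1\<close> in simp)
qed

lemma K_term_nth_abs_le: "\<bar>K_term n $ k\<bar> \<le> (if 3 * \<bar>n\<bar> \<le> int k then 1 else 0)"
proof -
  obtain E M where K: "K_term n = (-1) ^ nat \<bar>n\<bar> * (fps_X ^ nat E * inverse (1 + fps_X ^ M))"
    and E: "3 * \<bar>n\<bar> \<le> E" and M: "0 < M"
    by (rule K_term_shifted_form)
  have "\<bar>K_term n $ k\<bar> = (if k < nat E then 0 else \<bar>fps_geometric (-1) M $ (k - nat E)\<bar>)"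
    unfolding K neg_one_power_mult_nth inverse_one_plus_X_power[OF M] fps_X_power_mult_nth
    by (simp add: abs_mult)
  also have "\<dots> \<le> (if 3 * \<bar>n\<bar> \<le> int k then 1 else 0)"
  proof -
    have "\<bar>fps_geometric (-1) M $ j\<bar> \<le> (1 :: real)" for j
      by (simp add: fps_geometric_def power_abs)
    then show ?thesis using E by auto
  qed
  finally show ?thesis .
qed

lemma fps_bisum_K_term_nth_abs_le: "\<bar>fps_bisum K_term $ N\<bar> \<le> 2 * real (N div 3) + 1"
proof -
  define q where "q = int (N div 3)"
  have "K_term n $ k = 0" if "int k < \<bar>n\<bar>" for n k
    using K_term_nth_abs_le[of n k] that by auto
  then have "fps_bisum K_term $ N = (\<Sum>n\<in>{-int N..int N}. K_term n $ N)"
    by (subst fps_bisum_nth) (auto simp: fps_sum_nth)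
  also have "\<bar>\<dots>\<bar> \<le> (\<Sum>n\<in>{-int N..int N}. if 3 * \<bar>n\<bar> \<le> int N then 1 else 0)"
    by (rule order_trans[OF sum_abs sum_mono]) (rule K_term_nth_abs_le)
  also have "\<dots> = (\<Sum>n\<in>{-q..q}. 1)"
    by (rule sum.mono_neutral_cong_right) (auto simp: q_def)
  also have "\<dots> = 2 * real (N div 3) + 1"
    by (simp add: q_def)
  finally show ?thesis .
qed

theorem mainTheorem8:
  shows "\<forall>N::nat. fps_nth K N > 0"
proof
  fix N :: nat
  have "K $ N = 2 * K_product $ N + fps_bisum K_term $ N"
    by (simp add: K_eq_product_plus_bisum)
  moreover have "real (N div 3) \<le> real (N div 2)"
    by (simp add: div_le_mono2)
  ultimately show "K $ N > 0"
    using K_product_nth_ge[of N] fps_bisum_K_term_nth_abs_le[of N] by linarith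
qed

end
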